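(* Let $n\ge1$, $k\ge2$, $\gamma=((i_1\,j_1),\dots,(i_k\,j_k))\in\Sigma_n(k)$ and $l\in\{1,\dots,k-1\}$. Then $\sigma_l\cdot\gamma\in\Sigma_n(k)$ and $P(\sigma_l\cdot\gamma)=\sigma_l\cdot P(\gamma)$. Moreover, writing $\sigma_l\cdot\gamma=((i_{\sigma_l^{-1}(1)}\,\tilde j_1),\dots,(i_{\sigma_l^{-1}(k)}\,\tilde j_k))$, one has $\bigcup_{s=1}^k\{i_s,j_s\}=\bigcup_{s=1}^k\{i_s,\tilde j_s\}$.
   Context: Let $n\ge1$. $\mathfrak S_n$ is the symmetric group on $\{1,\dots,n\}$; products are composed right to left. $\mathsf T_n$ is the set of transpositions; a transposition is always written $(i\,j)$ with $i<j$. For $\sigma\in\mathfrak S_n$, $|\sigma|=n-(\text{number of cycles of }\sigma\text{, fixed points counted})$; $\sigma_1\preccurlyeq\sigma_2$ iff $|\sigma_2|=|\sigma_1|+|\sigma_1^{-1}\sigma_2|$. $\Sigma_n(k)=\{(\tau_1,\dots,\tau_k)\in(\mathsf T_n)^k : |\tau_1\cdots\tau_k|=k,\ \tau_1\cdots\tau_k\preccurlyeq(1\,2\,\dots\,n)\}$. $P:\Sigma_n(k)\to\{1,\dots,n-1\}^k$ sends $((i_1\,j_1),\dots,(i_k\,j_k))$ to $(i_1,\dots,i_k)$. The group $\mathfrak S_k$ acts on sequences by $\pi\cdot(x_1,\dots,x_k)=(x_{\pi^{-1}(1)},\dots,x_{\pi^{-1}(k)})$. Let $\sigma_l=(l\;l+1)\in\mathfrak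 S_k$. For $(g_1,\dots,g_k)\in(\mathsf T_n)^k$ define $\beta_l\cdot(g_1,\dots,g_k)=(g_1,\dots,g_{l-1},g_{l+1},g_{l+1}^{-1}g_lg_{l+1},g_{l+2},\dots,g_k)$ and $\beta_l^{-1}\cdot(g_1,\dots,g_k)=(g_1,\dots,g_{l-1},g_lg_{l+1}g_l^{-1},g_l,g_{l+2},\dots,g_k)$. For $\gamma=((i_1\,j_1),\dots,(i_k\,j_k))\in\Sigma_n(k)$ define $\sigma_l\cdot\gamma=\gamma$ if $i_l=i_{l+1}$, $\sigma_l\cdot\gamma=\beta_l\cdot\gamma$ if $i_l<i_{l+1}$, and $\sigma_l\cdot\gamma=\beta_l^{-1}\cdot\gamma$ if $i_l>i_{l+1}$. *)

theory Defs
  imports "HOL-Combinatorics.Combinatorics"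
begin

text \<open>Permutations of {1..n} are functions nat => nat fixing everything outside {1..n}.
  Products compose right to left, i.e. (s1 s2) = s1 o s2.\<close>

definition num_cycles :: "nat \<Rightarrow> (nat \<Rightarrow> nat) \<Rightarrow> nat" where
  "num_cycles n \<sigma> = card ((\<lambda>x. orbit \<sigma> x) ` {1..n})"

definition perm_len :: "nat \<Rightarrow> (nat \<Rightarrow> nat) \<Rightarrow> nat" where
  "perm_len n \<sigma> = n - num_cycles n \<sigma>"

definition perm_prec :: "nat \<Rightarrow> (nat \<Rightarrow> nat) \<Rightarrow> (nat \<Rightarrow> nat) \<Rightarrow> bool" where
  "perm_prec n \<sigma>1 \<sigma>2 \<longleftrightarrow> perm_len n \<sigma>2 = perm_len n \<sigma>1 + perm_len n (inv \<sigma>1 \<circ> \<sigma>2)"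

definition transpositions :: "nat \<Rightarrow> (nat \<Rightarrow> nat) set" where
  "transpositions n = {transpose i j | i j. 1 \<le> i \<and> i < j \<and> j \<le> n}"

definition long_cycle :: "nat \<Rightarrow> nat \<Rightarrow> nat" where
  "long_cycle n x = (if 1 \<le> x \<and> x < n then x + 1 else if x = n then 1 else x)"

definition list_prod :: "(nat \<Rightarrow> nat) list \<Rightarrow> nat \<Rightarrow> nat" where
  "list_prod ts = foldr (\<circ>) ts id"

definition Sigma_nk :: "nat \<Rightarrow> nat \<Rightarrow> (nat \<Rightarrow> nat) list set" where
  "Sigma_nk n k = {ts. length ts = k \<and> set ts \<subseteq> transpositions n
      \<and> perm_len n (list_prod ts) = k \<and> perm_prec n (list_prod ts) (long_cycle n)}"

definition tr_i :: "(nat \<Rightarrow> nat) \<Rightarrow> nat" where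
  "tr_i t = Min {x. t x \<noteq> x}"

definition tr_j :: "(nat \<Rightarrow> nat) \<Rightarrow> nat" where
  "tr_j t = Max {x. t x \<noteq> x}"

definition P_map :: "(nat \<Rightarrow> nat) list \<Rightarrow> nat list" where
  "P_map ts = map tr_i ts"

text \<open>Action of a permutation pi of {1..k} on sequences (lists of length k, 1-indexed):
  pi . (x_1,...,x_k) = (x_{pi^-1(1)},...,x_{pi^-1(k)}). List index s-1 stores x_s.\<close>
definition perm_act :: "(nat \<Rightarrow> nat) \<Rightarrow> 'a list \<Rightarrow> 'a list" where
  "perm_act \<pi> xs = map (\<lambda>s. xs ! (inv \<pi> s - 1)) [1..<length xs + 1]"

text \<open>Hurwitz moves beta_l and beta_l^-1 (l is 1-indexed).\<close>
definition beta :: "nat \<Rightarrow> (nat \<Rightarrow> nat) list \<Rightarrow> (nat \<Rightarrow> nat) list" where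
  "beta l gs = gs[l - 1 := gs ! l, l := inv (gs ! l) \<circ> (gs ! (l - 1)) \<circ> (gs ! l)]"

definition beta_inv :: "nat \<Rightarrow> (nat \<Rightarrow> nat) list \<Rightarrow> (nat \<Rightarrow> nat) list" where
  "beta_inv l gs = gs[l - 1 := (gs ! (l - 1)) \<circ> (gs ! l) \<circ> inv (gs ! (l - 1)), l := gs ! (l - 1)]"

definition sigma_act :: "nat \<Rightarrow> (nat \<Rightarrow> nat) list \<Rightarrow> (nat \<Rightarrow> nat) list" where
  "sigma_act l \<gamma> =
     (if tr_i (\<gamma> ! (l - 1)) = tr_i (\<gamma> ! l) then \<gamma>
      else if tr_i (\<gamma> ! (l - 1)) < tr_i (\<gamma> ! l) then beta l \<gamma>
      else beta_inv l \<gamma>)"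

end

theory Submission
  imports Defs
begin

(* The move sigma_l only touches the adjacent pair (g1, g2) = (tau_l, tau_{l+1})
   and replaces it by a pair (h1, h2) of transpositions with
     (a) h1 h2 = g1 g2,  (b) P(h1) = P(g2), P(h2) = P(g1),  (c) supp h1 u supp h2 = supp g1 u supp g2.
   Condition (a) leaves the product tau_1 ... tau_k unchanged, so membership in Sigma_n(k)
   (which only depends on the letters being transpositions and on the product) is preserved;
   (b) says that P swaps the entries l and l+1, which is exactly the action of (l l+1) on
   sequences; (c) preserves the union of all supports. *)

lemma transpose_moved_points: "a \<noteq> b \<Longrightarrow> {x. transpose a b x \<noteq> x} = {a, b}"
  by (auto simp: Transposition.transpose_def)

lemma tr_i_transpose [simp]: "a < b \<Longrightarrow> tr_i (transpose a b) = a"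
  unfolding tr_i_def by (subst transpose_moved_points) auto

lemma tr_j_transpose [simp]: "a < b \<Longrightarrow> tr_j (transpose a b) = b"
  unfolding tr_j_def by (subst transpose_moved_points) auto

lemma transpose_in_transpositions: "1 \<le> a \<Longrightarrow> a < b \<Longrightarrow> b \<le> n \<Longrightarrow> transpose a b \<in> transpositions n"
  unfolding transpositions_def by blast

lemma transpose_conj:
  "transpose c d \<circ> transpose a b \<circ> transpose c d = transpose (transpose c d a) (transpose c d b)"
  by (rule ext) (simp add: Transposition.transpose_def)

lemma conj_keeps_smaller_point:
  fixes a b c d n :: nat
  assumes "a < b" "a < c" "c < d" "b \<le> n" "d \<le> n"
  defines "b' \<equiv> transpose c d b"
  shows "transpose c d \<circ> transpose a b \<circ> transpose c d = transpose a b'"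
    and "a < b'" and "b' \<le> n" and "{c, d} \<union> {a, b'} = {a, b} \<union> {c, d}"
proof -
  have "transpose c d a = a" using assms by auto
  then show "transpose c d \<circ> transpose a b \<circ> transpose c d = transpose a b'"
    by (simp add: transpose_conj b'_def)
  show "a < b'" "b' \<le> n" "{c, d} \<union> {a, b'} = {a, b} \<union> {c, d}"
    using assms by (auto simp: Transposition.transpose_def)
qed

lemma list_prod_append: "list_prod (xs @ ys) = list_prod xs \<circ> list_prod ys"
  by (induct xs) (auto simp: list_prod_def)

lemma list_prod_replace_adjacent:
  assumes "h1 \<circ> h2 = g1 \<circ> g2"
  shows "list_prod (xs @ h1 # h2 # zs) = list_prod (xs @ g1 # g2 # zs)"
proof -
  have "list_prod (h1 # h2 # zs) = (h1 \<circ> h2) \<circ> list_prod zs"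
    by (simp add: list_prod_def comp_assoc)
  also have "\<dots> = list_prod (g1 # g2 # zs)"
    using assms by (simp add: list_prod_def comp_assoc)
  finally show ?thesis by (simp add: list_prod_append)
qed

lemma perm_act_length [simp]: "length (perm_act \<pi> xs) = length xs"
  unfolding perm_act_def by (simp del: upt_Suc)

lemma perm_act_nth: "i < length xs \<Longrightarrow> perm_act \<pi> xs ! i = xs ! (inv \<pi> (Suc i) - 1)"
  unfolding perm_act_def by (simp del: upt_Suc)

lemma perm_act_adjacent_swap:
  "perm_act (transpose (Suc (length xs)) (Suc (Suc (length xs)))) (xs @ a # b # zs)
     = xs @ b # a # zs"
proof (rule nth_equalityI)
  fix i
  assume "i < length (perm_act (transpose (Suc (length xs)) (Suc (Suc (length xs)))) (xs @ a # b # zs))"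
  then have i: "i < length (xs @ a # b # zs)" by simp
  then consider "i < length xs" | "i = length xs" | "i = Suc (length xs)"
    | m where "i = Suc (Suc (length xs)) + m"
    by (metis add_Suc_right less_antisym less_iff_Suc_add not_less_eq)
  then show "perm_act (transpose (Suc (length xs)) (Suc (Suc (length xs)))) (xs @ a # b # zs) ! i
      = (xs @ b # a # zs) ! i"
    using i by cases (auto simp: perm_act_nth nth_append)
qed simp

lemma union_over_positions:
  assumes "length g = k"
  shows "(\<Union>s\<in>{1..k}. F (g ! (s - 1))) = (\<Union>t\<in>set g. F t)"
proof -
  have "(\<Union>s\<in>{1..k}. F (g ! (s - 1))) = (\<Union>i\<in>{0..<k}. F (g ! i))"
  proof (intro equalityI subsetI)
    fix x assume "x \<in> (\<Union>i\<in>{0..<k}. F (g ! i))"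
    then obtain i where "i < k" "x \<in> F (g ! i)" by auto
    then show "x \<in> (\<Union>s\<in>{1..k}. F (g ! (s - 1)))"
      by (intro UN_I[of "Suc i"]) auto
  qed force
  also have "\<dots> = (\<Union>t\<in>(!) g ` {0..<k}. F t)" by simp
  also have "(!) g ` {0..<k} = set g" using assms by (simp add: nth_image)
  finally show ?thesis .
qed

lemma local_move:
  assumes S: "xs @ g1 # g2 # zs \<in> Sigma_nk n k"
    and prod: "h1 \<circ> h2 = g1 \<circ> g2"
    and T: "h1 \<in> transpositions n" "h2 \<in> transpositions n"
    and P: "tr_i h1 = tr_i g2" "tr_i h2 = tr_i g1"
    and supp: "{tr_i h1, tr_j h1} \<union> {tr_i h2, tr_j h2} = {tr_i g1, tr_j g1} \<union> {tr_i g2, tr_j g2}"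
  defines "\<gamma> \<equiv> xs @ g1 # g2 # zs" and "\<gamma>' \<equiv> xs @ h1 # h2 # zs" and "l \<equiv> Suc (length xs)"
  shows "\<gamma>' \<in> Sigma_nk n k
    \<and> P_map \<gamma>' = perm_act (transpose l (l + 1)) (P_map \<gamma>)
    \<and> (\<Union>s\<in>{1..k}. {tr_i (\<gamma> ! (s - 1)), tr_j (\<gamma> ! (s - 1))})
       = (\<Union>s\<in>{1..k}. {tr_i (\<gamma>' ! (s - 1)), tr_j (\<gamma>' ! (s - 1))})"
proof (intro conjI)
  have len: "length \<gamma>' = k" "length \<gamma> = k"
    using S by (auto simp: Sigma_nk_def \<gamma>_def \<gamma>'_def)
  have "set \<gamma>' \<subseteq> set \<gamma> \<union> {h1, h2}"
    by (auto simp: \<gamma>_def \<gamma>'_def)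
  then show "\<gamma>' \<in> Sigma_nk n k"
    using S T len list_prod_replace_adjacent[OF prod]
    by (auto simp: Sigma_nk_def \<gamma>_def \<gamma>'_def)
  have "P_map \<gamma>' = map tr_i xs @ tr_i g2 # tr_i g1 # map tr_i zs"
    using P by (simp add: P_map_def \<gamma>'_def)
  also have "\<dots> = perm_act (transpose l (l + 1)) (P_map \<gamma>)"
    using perm_act_adjacent_swap[of "map tr_i xs"] by (simp add: P_map_def \<gamma>_def l_def)
  finally show "P_map \<gamma>' = perm_act (transpose l (l + 1)) (P_map \<gamma>)" .
  have "(\<Union>t\<in>set \<gamma>. {tr_i t, tr_j t}) = (\<Union>t\<in>set \<gamma>'. {tr_i t, tr_j t})"
    using supp by (auto simp: \<gamma>_def \<gamma>'_def)
  then show "(\<Union>s\<in>{1..k}. {tr_i (\<gamma> ! (s - 1)), tr_j (\<gamma> ! (s - 1))})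
       = (\<Union>s\<in>{1..k}. {tr_i (\<gamma>' ! (s - 1)), tr_j (\<gamma>' ! (s - 1))})"
    unfolding union_over_positions[OF len(1), of "\<lambda>t. {tr_i t, tr_j t}"]
      union_over_positions[OF len(2), of "\<lambda>t. {tr_i t, tr_j t}"] .
qed

lemma sigma_act_split:
  "sigma_act (Suc (length xs)) (xs @ g1 # g2 # zs) =
     (if tr_i g1 = tr_i g2 then xs @ g1 # g2 # zs
      else if tr_i g1 < tr_i g2 then xs @ g2 # (inv g2 \<circ> g1 \<circ> g2) # zs
      else xs @ (g1 \<circ> g2 \<circ> inv g1) # g1 # zs)"
  by (simp add: sigma_act_def beta_def beta_inv_def list_update_append nth_append)

text \<open>In every case sigma_l is a local move in the sense of lemma local_move.  Since
  transpositions are involutions, the conjugates in beta and beta_inv are g2 g1 g2 and g1 g2 g1.\<close>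

lemma sigma_act_is_local_move:
  assumes g1: "g1 \<in> transpositions n" and g2: "g2 \<in> transpositions n"
  obtains h1 h2 where "sigma_act (Suc (length xs)) (xs @ g1 # g2 # zs) = xs @ h1 # h2 # zs"
    and "h1 \<circ> h2 = g1 \<circ> g2" and "h1 \<in> transpositions n" "h2 \<in> transpositions n"
    and "tr_i h1 = tr_i g2" "tr_i h2 = tr_i g1"
    and "{tr_i h1, tr_j h1} \<union> {tr_i h2, tr_j h2} = {tr_i g1, tr_j g1} \<union> {tr_i g2, tr_j g2}"
proof -
  obtain a b where ab: "g1 = transpose a b" "1 \<le> a" "a < b" "b \<le> n"
    using g1 unfolding transpositions_def by blast
  obtain c d where cd: "g2 = transpose c d" "1 \<le> c" "c < d" "d \<le> n"
    using g2 unfolding transpositions_def by blast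
  consider "a = c" | "a < c" | "c < a" by linarith
  then show ?thesis
  proof cases
    case 1
    then show ?thesis
      using that[of g1 g2] g1 g2 ab cd by (simp add: sigma_act_split Un_commute)
  next
    case 2
    note conj = conj_keeps_smaller_point[OF ab(3) 2 cd(3) ab(4) cd(4)]
    show ?thesis
    proof (rule that)
      show "sigma_act (Suc (length xs)) (xs @ g1 # g2 # zs) = xs @ g2 # (g2 \<circ> g1 \<circ> g2) # zs"
        using ab cd 2 by (simp add: sigma_act_split)
      show "g2 \<circ> (g2 \<circ> g1 \<circ> g2) = g1 \<circ> g2"
        by (simp add: cd(1) comp_assoc[symmetric])
      show "g2 \<circ> g1 \<circ> g2 \<in> transpositions n"
        using ab cd conj by (simp add: transpose_in_transpositions)
    qed (use g2 ab cd conj in auto)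
  next
    case 3
    note conj = conj_keeps_smaller_point[OF cd(3) 3 ab(3) cd(4) ab(4)]
    show ?thesis
    proof (rule that)
      show "sigma_act (Suc (length xs)) (xs @ g1 # g2 # zs) = xs @ (g1 \<circ> g2 \<circ> g1) # g1 # zs"
        using ab cd 3 by (simp add: sigma_act_split)
      show "(g1 \<circ> g2 \<circ> g1) \<circ> g1 = g1 \<circ> g2"
        by (simp add: ab(1) comp_assoc)
      show "g1 \<circ> g2 \<circ> g1 \<in> transpositions n"
        using ab cd conj by (simp add: transpose_in_transpositions)
    qed (use g1 ab cd conj in auto)
  qed
qed

theorem lemma4p1:
  fixes n k l :: nat and \<gamma> :: "(nat \<Rightarrow> nat) list"
  assumes "n \<ge> 1" and "k \<ge> 2" and "\<gamma> \<in> Sigma_nk n k" and "1 \<le> l" and "l \<le> k - 1"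
  shows "sigma_act l \<gamma> \<in> Sigma_nk n k
    \<and> P_map (sigma_act l \<gamma>) = perm_act (transpose l (l + 1)) (P_map \<gamma>)
    \<and> (\<Union>s\<in>{1..k}. {tr_i (\<gamma> ! (s - 1)), tr_j (\<gamma> ! (s - 1))})
       = (\<Union>s\<in>{1..k}. {tr_i (sigma_act l \<gamma> ! (s - 1)), tr_j (sigma_act l \<gamma> ! (s - 1))})"
proof -
  have len: "length \<gamma> = k" and T: "set \<gamma> \<subseteq> transpositions n"
    using assms(3) by (auto simp: Sigma_nk_def)
  define xs where "xs = take (l - 1) \<gamma>"
  define zs where "zs = drop (Suc l) \<gamma>"
  define g1 where "g1 = \<gamma> ! (l - 1)"
  define g2 where "g2 = \<gamma> ! l"
  have l: "l = Suc (length xs)" and "l < length \<gamma>"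
    using assms len by (auto simp: xs_def)
  then have split: "\<gamma> = xs @ g1 # g2 # zs"
    using id_take_nth_drop[of "l - 1" \<gamma>]
    by (simp add: xs_def zs_def g1_def g2_def Cons_nth_drop_Suc)
  have "g1 \<in> transpositions n" "g2 \<in> transpositions n"
    using T \<open>l < length \<gamma>\<close> by (auto simp: g1_def g2_def dest: nth_mem)
  then obtain h1 h2 where "sigma_act l \<gamma> = xs @ h1 # h2 # zs" and "h1 \<circ> h2 = g1 \<circ> g2"
    "h1 \<in> transpositions n" "h2 \<in> transpositions n" "tr_i h1 = tr_i g2" "tr_i h2 = tr_i g1"
    "{tr_i h1, tr_j h1} \<union> {tr_i h2, tr_j h2} = {tr_i g1, tr_j g1} \<union> {tr_i g2, tr_j g2}"
    unfolding split l by (rule sigma_act_is_local_move)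
  with local_move[of xs g1 g2 zs n k h1 h2] assms(3)
  show ?thesis unfolding split l by simp
qed

end
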